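(* Let $G$ be a 5-vertex-critical $(P_5,\text{chair})$-free graph and let $C=v_1v_2v_3v_4v_5v_1$ be an induced $C_5$ in $G$. Then $|S^1_3(i)|\le 2$ for all $1\le i\le 5$.
   Context: All graphs are finite and simple; $P_5$ is the path on 5 vertices; the chair is a $P_4$ plus a vertex adjacent to exactly one of the two middle vertices of the $P_4$; "$H$-free" means no induced subgraph isomorphic to $H$; $G$ is $k$-vertex-critical if $\chi(G)=k$ and $\chi(G-v)<k$ for all $v$. Indices modulo 5. $S^1_3(i)=\{v\in V(G)\setminus V(C): N(v)\cap V(C)=\{v_{i-1},v_i,v_{i+1}\}\}$. *)

theory Defs
  imports Main
begin

definition simple_graph :: "'a set \<Rightarrow> ('a \<Rightarrow> 'a \<Rightarrow> bool) \<Rightarrow> bool" where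
  "simple_graph V E \<longleftrightarrow> finite V \<and> (\<forall>x y. E x y \<longrightarrow> E y x) \<and> (\<forall>x. \<not> E x x)
     \<and> (\<forall>x y. E x y \<longrightarrow> x \<in> V \<and> y \<in> V)"

definition induced_subgraph_of :: "'b set \<Rightarrow> ('b \<Rightarrow> 'b \<Rightarrow> bool) \<Rightarrow> 'a set \<Rightarrow> ('a \<Rightarrow> 'a \<Rightarrow> bool) \<Rightarrow> bool" where
  "induced_subgraph_of W F V E \<longleftrightarrow>
     (\<exists>f. inj_on f W \<and> f ` W \<subseteq> V \<and> (\<forall>x\<in>W. \<forall>y\<in>W. E (f x) (f y) \<longleftrightarrow> F x y))"

definition H_free :: "'b set \<Rightarrow> ('b \<Rightarrow> 'b \<Rightarrow> bool) \<Rightarrow> 'a set \<Rightarrow> ('a \<Rightarrow> 'a \<Rightarrow> bool) \<Rightarrow> bool" where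
  "H_free W F V E \<longleftrightarrow> \<not> induced_subgraph_of W F V E"

definition P5_V :: "nat set" where "P5_V = {0..<5}"
definition P5_E :: "nat \<Rightarrow> nat \<Rightarrow> bool" where
  "P5_E i j \<longleftrightarrow> i < 5 \<and> j < 5 \<and> (i = j + 1 \<or> j = i + 1)"

definition chair_V :: "nat set" where "chair_V = {0..<5}"
definition chair_E :: "nat \<Rightarrow> nat \<Rightarrow> bool" where
  "chair_E i j \<longleftrightarrow> {i, j} \<in> {{0,1}, {1,2}, {2,3}, {1,4}}"

definition colorable :: "'a set \<Rightarrow> ('a \<Rightarrow> 'a \<Rightarrow> bool) \<Rightarrow> nat \<Rightarrow> bool" where
  "colorable V E k \<longleftrightarrow> (\<exists>c :: 'a \<Rightarrow> nat. (\<forall>x\<in>V. c x < k) \<and>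
      (\<forall>x\<in>V. \<forall>y\<in>V. E x y \<longrightarrow> c x \<noteq> c y))"

definition chromatic_number :: "'a set \<Rightarrow> ('a \<Rightarrow> 'a \<Rightarrow> bool) \<Rightarrow> nat" where
  "chromatic_number V E = (LEAST k. colorable V E k)"

definition del_vertex_E :: "('a \<Rightarrow> 'a \<Rightarrow> bool) \<Rightarrow> 'a \<Rightarrow> 'a \<Rightarrow> 'a \<Rightarrow> bool" where
  "del_vertex_E E v x y \<longleftrightarrow> E x y \<and> x \<noteq> v \<and> y \<noteq> v"

definition vertex_critical :: "nat \<Rightarrow> 'a set \<Rightarrow> ('a \<Rightarrow> 'a \<Rightarrow> bool) \<Rightarrow> bool" where
  "vertex_critical k V E \<longleftrightarrow> chromatic_number V E = k \<and>
     (\<forall>v\<in>V. chromatic_number (V - {v}) (del_vertex_E E v) < k)"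

definition induced_C5 :: "'a set \<Rightarrow> ('a \<Rightarrow> 'a \<Rightarrow> bool) \<Rightarrow> (nat \<Rightarrow> 'a) \<Rightarrow> bool" where
  "induced_C5 V E c \<longleftrightarrow> (\<forall>i<5. c i \<in> V) \<and> inj_on c {0..<5} \<and>
     (\<forall>i<5. \<forall>j<5. E (c i) (c j) \<longleftrightarrow> (j = (i + 1) mod 5 \<or> i = (j + 1) mod 5))"

text \<open>S^1_3(i): vertices outside C whose neighbourhood on C is exactly
  {c (i-1), c i, c (i+1)} (indices mod 5).\<close>
definition S13 :: "'a set \<Rightarrow> ('a \<Rightarrow> 'a \<Rightarrow> bool) \<Rightarrow> (nat \<Rightarrow> 'a) \<Rightarrow> nat \<Rightarrow> 'a set" where
  "S13 V E c i = {v \<in> V - c ` {0..<5}.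
      {u \<in> c ` {0..<5}. E v u} = {c ((i + 4) mod 5), c (i mod 5), c ((i + 1) mod 5)}}"

end

theory Submission
  imports Defs
begin

text \<open>Two vertices of \<open>S\<^sup>1\<^sub>3(i)\<close> have the same neighbours on \<open>C\<close>; if they were
  nonadjacent, together with the path \<open>v\<^sub>i\<^sub>+\<^sub>1 v\<^sub>i\<^sub>+\<^sub>2 v\<^sub>i\<^sub>+\<^sub>3\<close> they would induce a chair.
  So \<open>S\<^sup>1\<^sub>3(i) \<union> {v\<^sub>i, v\<^sub>i\<^sub>+\<^sub>1}\<close> is a clique avoiding \<open>v\<^sub>i\<^sub>+\<^sub>2\<close>. By criticality
  \<open>G - v\<^sub>i\<^sub>+\<^sub>2\<close> is 4-colourable, so this clique has at most 4 vertices.\<close>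

definition clique :: "'a set \<Rightarrow> ('a \<Rightarrow> 'a \<Rightarrow> bool) \<Rightarrow> 'a set \<Rightarrow> bool" where
  "clique V E K \<longleftrightarrow> K \<subseteq> V \<and> (\<forall>x\<in>K. \<forall>y\<in>K. x \<noteq> y \<longrightarrow> E x y)"

lemma simple_graph_colorable_card:
  assumes "simple_graph V E"
  shows "colorable V E (card V)"
proof -
  have "finite V" and irrefl: "\<not> E x x" for x
    using assms unfolding simple_graph_def by blast+
  then obtain g :: "'a \<Rightarrow> nat" where g: "bij_betw g V {0..<card V}"
    using ex_bij_betw_finite_nat by blast
  have "g x < card V" if "x \<in> V" for x
    using g that by (auto dest: bij_betw_apply)
  moreover have "g x \<noteq> g y" if "x \<in> V" "y \<in> V" "E x y" for x y
    using g that irrefl by (metis bij_betw_imp_inj_on inj_onD)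
  ultimately show ?thesis
    unfolding colorable_def by blast
qed

lemma colorable_chromatic_number:
  assumes "simple_graph V E"
  shows "colorable V E (chromatic_number V E)"
  unfolding chromatic_number_def using simple_graph_colorable_card[OF assms] by (rule LeastI)

lemma clique_card_le_colorable:
  assumes "colorable V E k" "clique V E K"
  shows "card K \<le> k"
proof -
  obtain col :: "'a \<Rightarrow> nat" where col: "\<forall>x\<in>V. col x < k" "\<forall>x\<in>V. \<forall>y\<in>V. E x y \<longrightarrow> col x \<noteq> col y"
    using assms(1) unfolding colorable_def by blast
  have "inj_on col K" "col ` K \<subseteq> {..<k}"
    using col assms(2) unfolding clique_def inj_on_def by blast+
  then have "card K \<le> card {..<k}"
    by (intro card_inj_on_le) auto
  then show ?thesis
    by simp
qed

lemma clique_card_le_chromatic_number: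
  assumes "simple_graph V E" "clique V E K"
  shows "card K \<le> chromatic_number V E"
  using clique_card_le_colorable[OF colorable_chromatic_number] assms .

lemma simple_graph_del_vertex:
  assumes "simple_graph V E"
  shows "simple_graph (V - {v}) (del_vertex_E E v)"
  using assms unfolding simple_graph_def del_vertex_E_def by auto

lemma clique_del_vertex:
  assumes "clique V E K" "v \<notin> K"
  shows "clique (V - {v}) (del_vertex_E E v) K"
  using assms unfolding clique_def del_vertex_E_def by blast

lemma vertex_critical_clique_card_less:
  assumes "simple_graph V E" "vertex_critical k V E" "clique V E K" "v \<in> V - K"
  shows "card K < k"
  using assms clique_card_le_chromatic_number[OF simple_graph_del_vertex clique_del_vertex]
  unfolding vertex_critical_def by (meson DiffD1 DiffD2 le_less_trans)

lemma chair_E_iff: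
  "chair_E p q \<longleftrightarrow> (p=0\<and>q=1 \<or> p=1\<and>q=0 \<or> p=1\<and>q=2 \<or> p=2\<and>q=1 \<or> p=2\<and>q=3 \<or> p=3\<and>q=2
     \<or> p=1\<and>q=4 \<or> p=4\<and>q=1)"
  unfolding chair_E_def by (auto simp: doubleton_eq_iff)

lemma induced_chair_of_nonadjacent_twins:
  assumes "simple_graph V E" and "x \<in> V" "y \<in> V" "a \<in> V" "b \<in> V" "d \<in> V"
    and "distinct [x, y, a, b, d]"
    and "E a b" "E b d" "\<not> E a d" "\<not> E x y"
    and "E x a" "\<not> E x b" "\<not> E x d" "E y a" "\<not> E y b" "\<not> E y d"
  shows "induced_subgraph_of chair_V chair_E V E"
proof -
  have sym: "E u w \<longleftrightarrow> E w u" for u w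
    using assms(1) unfolding simple_graph_def by blast
  have irr: "\<not> E u u" for u
    using assms(1) unfolding simple_graph_def by blast
  define f where "f n = (if n = 0 then x else if n = 1 then a else if n = 2 then b
       else if n = 3 then d else y)" for n :: nat
  have chair_V: "chair_V = {0, 1, 2, 3, 4}"
    unfolding chair_V_def by auto
  have "inj_on f chair_V" "f ` chair_V \<subseteq> V"
    using assms(2-7) unfolding chair_V f_def inj_on_def by auto
  moreover have "\<forall>p\<in>chair_V. \<forall>q\<in>chair_V. E (f p) (f q) = chair_E p q"
    using assms(8-) sym irr unfolding chair_V f_def chair_E_iff by auto
  ultimately show ?thesis
    unfolding induced_subgraph_of_def by blast
qed

lemma less_5_cases: "(i::nat) < 5 \<Longrightarrow> i = 0 \<or> i = 1 \<or> i = 2 \<or> i = 3 \<or> i = 4"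
  by auto

lemma induced_C5_eq_iff:
  assumes "induced_C5 V E c" "j < 5" "k < 5"
  shows "c j = c k \<longleftrightarrow> j = k"
  using assms unfolding induced_C5_def by (auto dest: inj_onD)

lemma S13_subset: "S13 V E c i \<subseteq> V - c ` {0..<5}"
  unfolding S13_def by blast

lemma S13_not_cycle_vertex: "j < 5 \<Longrightarrow> c j \<notin> S13 V E c i"
  unfolding S13_def by auto

lemma S13_adj_iff:
  assumes "x \<in> S13 V E c i" "induced_C5 V E c" "i < 5" "j < 5"
  shows "E x (c j) \<longleftrightarrow> j = (i + 4) mod 5 \<or> j = i \<or> j = (i + 1) mod 5"
proof -
  have "E x (c j) \<longleftrightarrow> c j \<in> {u \<in> c ` {0..<5}. E x u}"
    using assms(4) by auto
  also have "\<dots> \<longleftrightarrow> c j \<in> {c ((i + 4) mod 5), c i, c ((i + 1) mod 5)}"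
    using assms(1,3) unfolding S13_def by auto
  also have "\<dots> \<longleftrightarrow> j = (i + 4) mod 5 \<or> j = i \<or> j = (i + 1) mod 5"
    using induced_C5_eq_iff[OF assms(2)] assms(3,4) by simp
  finally show ?thesis .
qed

lemma S13_adjacent:
  assumes "simple_graph V E" "H_free chair_V chair_E V E" "induced_C5 V E c" "i < 5"
    and "x \<in> S13 V E c i" "y \<in> S13 V E c i" "x \<noteq> y"
  shows "E x y"
proof (rule ccontr)
  assume "\<not> E x y"
  let ?a = "(i + 1) mod 5" and ?b = "(i + 2) mod 5" and ?d = "(i + 3) mod 5"
  have idx: "?a < 5" "?b < 5" "?d < 5" "distinct [?a, ?b, ?d]"
    "?b \<noteq> (i + 4) mod 5" "?b \<noteq> i" "?d \<noteq> (i + 4) mod 5" "?d \<noteq> i"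
    "?b = (?a + 1) mod 5" "?d = (?b + 1) mod 5" "?d \<noteq> (?a + 1) mod 5" "?a \<noteq> (?d + 1) mod 5"
    using less_5_cases[OF \<open>i < 5\<close>] by (elim disjE; simp)+
  have C: "\<forall>p<5. c p \<in> V"
    "\<forall>p<5. \<forall>q<5. E (c p) (c q) \<longleftrightarrow> q = (p + 1) mod 5 \<or> p = (q + 1) mod 5"
    using assms(3) unfolding induced_C5_def by blast+
  have V: "x \<in> V" "y \<in> V" "c ?a \<in> V" "c ?b \<in> V" "c ?d \<in> V"
    using assms(5,6) S13_subset[of V E c i] C(1) idx(1-3) by auto
  have "distinct [c ?a, c ?b, c ?d]"
    using idx(1-4) induced_C5_eq_iff[OF assms(3)] by auto
  moreover have "c ?a \<notin> S13 V E c i" "c ?b \<notin> S13 V E c i" "c ?d \<notin> S13 V E c i"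
    by (rule S13_not_cycle_vertex, rule idx)+
  ultimately have "distinct [x, y, c ?a, c ?b, c ?d]"
    using assms(5,6) \<open>x \<noteq> y\<close> by fastforce
  moreover have "E (c ?a) (c ?b)" "E (c ?b) (c ?d)" "\<not> E (c ?a) (c ?d)"
    using C(2) idx by blast+
  moreover have "E x (c ?a)" "\<not> E x (c ?b)" "\<not> E x (c ?d)"
    "E y (c ?a)" "\<not> E y (c ?b)" "\<not> E y (c ?d)"
    using S13_adj_iff[OF assms(5,3,4)] S13_adj_iff[OF assms(6,3,4)] idx by simp_all
  ultimately have "induced_subgraph_of chair_V chair_E V E"
    using induced_chair_of_nonadjacent_twins[OF assms(1) V] \<open>\<not> E x y\<close> by blast
  then show False
    using assms(2) unfolding H_free_def by blast
qed

lemma S13_Un_clique: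
  assumes "simple_graph V E" "H_free chair_V chair_E V E" "induced_C5 V E c" "i < 5"
  shows "clique V E (S13 V E c i \<union> {c i, c ((i + 1) mod 5)})"
proof -
  let ?S = "S13 V E c i" and ?a = "(i + 1) mod 5"
  have sym: "E u w \<Longrightarrow> E w u" for u w
    using assms(1) unfolding simple_graph_def by blast
  have C: "c i \<in> V" "c ?a \<in> V" "E (c i) (c ?a)"
    using assms(3,4) unfolding induced_C5_def by auto
  have "E x y" if "x \<in> ?S" "y \<in> ?S" "x \<noteq> y" for x y
    using S13_adjacent[OF assms] that .
  moreover have "E x (c i)" "E x (c ?a)" if "x \<in> ?S" for x
    using S13_adj_iff[OF that assms(3,4)] assms(4) by simp_all
  ultimately show ?thesis
    unfolding clique_def using S13_subset[of V E c i] C sym by auto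
qed

theorem mainTheorem13:
  fixes V :: "'a set" and E :: "'a \<Rightarrow> 'a \<Rightarrow> bool" and c :: "nat \<Rightarrow> 'a"
  assumes "simple_graph V E"
    and "vertex_critical 5 V E"
    and "H_free P5_V P5_E V E"
    and "H_free chair_V chair_E V E"
    and "induced_C5 V E c"
  shows "\<forall>i<5. card (S13 V E c i) \<le> 2"
proof (intro allI impI)
  fix i :: nat assume i: "i < 5"
  let ?S = "S13 V E c i" and ?K = "S13 V E c i \<union> {c i, c ((i + 1) mod 5)}"
  have idx: "(i + 1) mod 5 < 5" "(i + 2) mod 5 < 5" "distinct [i, (i + 1) mod 5, (i + 2) mod 5]"
    using less_5_cases[OF i] by (elim disjE; simp)+
  then have "distinct [c i, c ((i + 1) mod 5), c ((i + 2) mod 5)]" "c ((i + 2) mod 5) \<in> V"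
    using i induced_C5_eq_iff[OF assms(5)] assms(5) unfolding induced_C5_def by auto
  moreover have "c i \<notin> ?S" "c ((i + 1) mod 5) \<notin> ?S" "c ((i + 2) mod 5) \<notin> ?S"
    by (rule S13_not_cycle_vertex, rule i idx)+
  moreover have "finite ?S"
    using assms(1) finite_subset[OF S13_subset finite_Diff] unfolding simple_graph_def by blast
  ultimately have "card ?K = card ?S + 2" "c ((i + 2) mod 5) \<in> V - ?K"
    by auto
  moreover have "card ?K < 5"
    using vertex_critical_clique_card_less[OF assms(1,2) S13_Un_clique[OF assms(1,4,5) i]]
      calculation(2) .
  ultimately show "card ?S \<le> 2" by simp
qed

end
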